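(* Let $\{a_n\}_{n\ge 0}$ be a real-valued sequence with $\{a_n\}\in GMS$. If the series $\sum_{n=0}^\infty a_n$ converges, then $n a_n\to 0$ as $n\to\infty$.
   Context: A complex sequence $\{a_n\}_{n\ge0}$ tending to $0$ is general monotone, written $\{a_n\}\in GMS$, if there exist constants $C>1$ and $\lambda>1$ such that for every $n\in\mathbb{N}$, $$\sum_{k=n}^{2n}|a_k-a_{k+1}|\le C\sum_{n/\lambda\le k\le\lambda n}\frac{|a_k|}{k}.$$ *)

theory Defs
  imports "HOL-Analysis.Analysis"
begin

definition GMS :: "(nat \<Rightarrow> complex) \<Rightarrow> bool" where
  "GMS a \<longleftrightarrow> a \<longlonglongrightarrow> 0 \<and>
     (\<exists>C::real. \<exists>L::real. C > 1 \<and> L > 1 \<and>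
        (\<forall>n::nat. n \<ge> 1 \<longrightarrow>
           (\<Sum>k = n..2*n. norm (a k - a (k+1)))
             \<le> C * (\<Sum>k \<in> {k::nat. real n / L \<le> real k \<and> real k \<le> L * real n}.
                      norm (a k) / real k)))"

end

theory Submission
  imports Defs "HOL-Library.Discrete_Functions"
begin

(* Group the terms into dyadic blocks I_j = [2^j, 2^(j+1)) with mass X_j = \<Sum>_{k \<in> I_j} |a_k| and
   variation V_j = \<Sum>_{k \<in> I_j} |a_k - a_(k+1)|. The GM condition at n = 2^j bounds V_j by
   C L 2^(-j) times the total mass of the neighbouring blocks I_(j-r), ..., I_(j+r), where L \<le> 2^r.
   Cutting I_j into 2^s pieces of equal length and using the Cauchy criterion on every piece gives
   X_j \<le> \<epsilon> + 2^(j-s) V_j, hence for all \<theta>, \<epsilon> > 0 eventually X_j \<le> \<epsilon> + \<theta> (X_(j-r) + ... + X_(j+r)).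
   Iterating this inequality, starting from the trivial bound X_j = O(2^j), first shows that X is
   bounded and then that X_j \<rightarrow> 0. Finally n |a_n| \<le> 2 (X_j + 2^j V_j) for n \<in> I_j, and the right-hand
   side tends to 0. *)

lemma norm_diff_le_sum_norm_diff:
  fixes f :: "nat \<Rightarrow> 'a::real_normed_vector"
  assumes "x \<in> {p..q}" "y \<in> {p..q}"
  shows "norm (f x - f y) \<le> (\<Sum>k\<in>{p..<q}. norm (f k - f (Suc k)))"
proof -
  have *: "norm (f m - f n) \<le> (\<Sum>k\<in>{p..<q}. norm (f k - f (Suc k)))"
    if "m \<le> n" "m \<in> {p..q}" "n \<in> {p..q}" for m n
  proof -
    have "(\<Sum>k\<in>{m..<n}. f k - f (Suc k)) = f m - f n"
      using sum_Suc_diff'[OF \<open>m \<le> n\<close>, of f] by (simp add: sum_subtractf, metis minus_diff_eq)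
    then have "norm (f m - f n) = norm (\<Sum>k\<in>{m..<n}. f k - f (Suc k))"
      by simp
    also have "\<dots> \<le> (\<Sum>k\<in>{m..<n}. norm (f k - f (Suc k)))"
      by (rule norm_sum)
    also have "\<dots> \<le> (\<Sum>k\<in>{p..<q}. norm (f k - f (Suc k)))"
      using that by (intro sum_mono2) auto
    finally show ?thesis .
  qed
  show ?thesis
    using *[of x y] *[of y x] assms by (cases "x \<le> y") (auto simp: norm_minus_commute)
qed

lemma sum_norm_le_norm_sum_plus_variation:
  fixes f :: "nat \<Rightarrow> 'a::real_normed_vector"
  shows "(\<Sum>k\<in>{p..<q}. norm (f k))
    \<le> norm (\<Sum>k\<in>{p..<q}. f k) + real (q - p) * (\<Sum>k\<in>{p..<q}. norm (f k - f (Suc k)))"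
proof (cases "p < q")
  case False
  then show ?thesis by simp
next
  case True
  let ?V = "\<Sum>k\<in>{p..<q}. norm (f k - f (Suc k))"
  have pointwise: "real (q - p) * norm (f k) \<le> norm (\<Sum>m\<in>{p..<q}. f m) + real (q - p) * ?V"
    if k: "k \<in> {p..<q}" for k
  proof -
    \<comment> \<open>average the identity \<open>f k = f m + (f k - f m)\<close> over all \<open>m\<close> in the block\<close>
    have "real (q - p) * norm (f k) = norm ((\<Sum>m\<in>{p..<q}. f m) + (\<Sum>m\<in>{p..<q}. f k - f m))"
      by (simp add: sum_subtractf sum_constant_scaleR)
    also have "\<dots> \<le> norm (\<Sum>m\<in>{p..<q}. f m) + (\<Sum>m\<in>{p..<q}. norm (f k - f m))"
      by (intro order_trans[OF norm_triangle_ineq] add_left_mono norm_sum)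
    also have "(\<Sum>m\<in>{p..<q}. norm (f k - f m)) \<le> (\<Sum>m\<in>{p..<q}. ?V)"
      using k by (intro sum_mono norm_diff_le_sum_norm_diff) auto
    finally show ?thesis by simp
  qed
  have "real (q - p) * (\<Sum>k\<in>{p..<q}. norm (f k))
      \<le> real (q - p) * (norm (\<Sum>m\<in>{p..<q}. f m) + real (q - p) * ?V)"
  proof -
    have "(\<Sum>k\<in>{p..<q}. real (q - p) * norm (f k))
        \<le> (\<Sum>k\<in>{p..<q}. norm (\<Sum>m\<in>{p..<q}. f m) + real (q - p) * ?V)"
      by (rule sum_mono) (rule pointwise)
    then show ?thesis by (simp only: sum_distrib_left sum_constant card_atLeastLessThan)
  qed
  then show ?thesis
    using True by (simp add: mult_le_cancel_left)
qed

lemma sum_dyadic_blocks: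
  fixes g :: "nat \<Rightarrow> 'a::comm_monoid_add"
  assumes "m \<le> n"
  shows "(\<Sum>k\<in>{2 ^ m..<2 ^ n}. g k) = (\<Sum>i\<in>{m..<n}. \<Sum>k\<in>{2 ^ i..<2 ^ Suc i}. g k)"
  using assms
proof (induction n rule: dec_induct)
  case (step n)
  have "(2::nat) ^ m \<le> 2 ^ n" "(2::nat) ^ n \<le> 2 ^ Suc n"
    using step.hyps by (auto intro: power_increasing)
  then have "(\<Sum>k\<in>{2 ^ m..<2 ^ Suc n}. g k) = (\<Sum>k\<in>{2 ^ m..<2 ^ n}. g k) + (\<Sum>k\<in>{2 ^ n..<2 ^ Suc n}. g k)"
    by (rule sum.atLeastLessThan_concat[symmetric])
  with step show ?case
    by (simp only: sum.atLeastLessThan_Suc)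
qed simp

lemma sum_equal_blocks:
  fixes g :: "nat \<Rightarrow> 'a::comm_monoid_add"
  shows "(\<Sum>k\<in>{p..<p + N * h}. g k) = (\<Sum>t<N. \<Sum>k\<in>{p + t * h..<p + t * h + h}. g k)"
proof (induction N)
  case (Suc N)
  have "(\<Sum>k\<in>{p..<p + Suc N * h}. g k)
      = (\<Sum>k\<in>{p..<p + N * h}. g k) + (\<Sum>k\<in>{p + N * h..<p + N * h + h}. g k)"
    using sum.atLeastLessThan_concat[of p "p + N * h" "p + N * h + h" g] by (simp add: algebra_simps)
  then show ?case using Suc.IH by simp
qed simp

lemma sum_window_le:
  fixes X :: "nat \<Rightarrow> real"
  assumes "\<And>i. i \<in> {j - r..j + r} \<Longrightarrow> X i \<le> M" "0 \<le> M"
  shows "(\<Sum>i\<in>{j - r..j + r}. X i) \<le> (2 * real r + 1) * M"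
proof -
  have "(\<Sum>i\<in>{j - r..j + r}. X i) \<le> real (card {j - r..j + r}) * M"
    by (rule sum_bounded_above) (use assms in auto)
  also have "\<dots> \<le> (2 * real r + 1) * M"
    using \<open>0 \<le> M\<close> by (intro mult_right_mono) auto
  finally show ?thesis .
qed

lemma bounded_of_window_domination:
  fixes X :: "nat \<Rightarrow> real"
  assumes growth: "\<And>j. X j \<le> c * 2 ^ j" "0 \<le> c"
    and theta: "0 \<le> \<theta>" "\<theta> * (2 * real r + 1) * 2 ^ Suc r \<le> 1"
    and dom: "eventually (\<lambda>j. X j \<le> K + \<theta> * (\<Sum>i\<in>{j - r..j + r}. X i)) sequentially"
  shows "\<exists>B. \<forall>j. X j \<le> B"
proof -
  obtain J where J: "\<And>j. J \<le> j \<Longrightarrow> X j \<le> K + \<theta> * (\<Sum>i\<in>{j - r..j + r}. X i)"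
    using dom by (auto simp: eventually_sequentially)
  define B where "B = max (2 * K) (Max (insert 0 (X ` {..<J})))"
  have B: "0 \<le> B" "2 * K \<le> B" "\<And>j. j < J \<Longrightarrow> X j \<le> B"
    unfolding B_def by (auto simp: le_max_iff_disj)
  \<comment> \<open>the initial growth bound is halved at every application of the domination\<close>
  have halving: "X j \<le> B + c * 2 ^ j / 2 ^ t" for t j
  proof (induction t arbitrary: j)
    case 0
    show ?case using growth B by (simp add: add_increasing)
  next
    case (Suc t)
    show ?case
    proof (cases "j < J")
      case True
      then show ?thesis using B growth(2) by (simp add: add_increasing2)
    next
      case False
      let ?M = "B + c * 2 ^ (j + r) / 2 ^ t"
      have "X i \<le> ?M" if "i \<in> {j - r..j + r}" for i
      proof -
        have "c * 2 ^ i / 2 ^ t \<le> c * 2 ^ (j + r) / 2 ^ t"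
          using that growth(2) by (intro divide_right_mono mult_left_mono power_increasing) auto
        then show ?thesis using Suc.IH[of i] by linarith
      qed
      then have "(\<Sum>i\<in>{j - r..j + r}. X i) \<le> (2 * real r + 1) * ?M"
        using B growth(2) by (intro sum_window_le) auto
      then have "\<theta> * (\<Sum>i\<in>{j - r..j + r}. X i) \<le> \<theta> * ((2 * real r + 1) * ?M)"
        using theta(1) by (rule mult_left_mono)
      moreover have "X j \<le> K + \<theta> * (\<Sum>i\<in>{j - r..j + r}. X i)"
        using J[of j] False by simp
      ultimately have "X j \<le> K + \<theta> * (2 * real r + 1) * ?M"
        by (simp only: mult.assoc)
      also have "\<theta> * (2 * real r + 1) * ?M \<le> ?M / 2 ^ Suc r"
      proof -
        have "\<theta> * (2 * real r + 1) \<le> 1 / 2 ^ Suc r"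
          using theta(2) by (simp only: le_divide_eq zero_less_power zero_less_numeral if_True)
        from mult_right_mono[OF this, of ?M] show ?thesis
          using B growth(2) by simp
      qed
      also have "?M / 2 ^ Suc r = B / 2 ^ Suc r + c * 2 ^ j / 2 ^ Suc t"
        by (simp add: field_simps power_add)
      also have "B / 2 ^ Suc r \<le> B / 2"
        using B by (intro divide_left_mono) auto
      finally show ?thesis using B by simp
    qed
  qed
  have "X j \<le> B" for j
  proof (rule LIMSEQ_le_const)
    show "(\<lambda>t. B + c * 2 ^ j / 2 ^ t) \<longlonglongrightarrow> B"
      using tendsto_add[OF tendsto_const LIMSEQ_divide_realpow_zero[of 2 "c * 2 ^ j"]] by simp
  qed (use halving in auto)
  then show ?thesis by auto
qed

lemma eventually_le_of_window_domination:
  fixes X :: "nat \<Rightarrow> real"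
  assumes bound: "\<And>j. X j \<le> B" "0 \<le> B"
    and theta: "0 \<le> \<theta>" "\<theta> * (2 * real r + 1) \<le> 1 / 2"
    and dom: "eventually (\<lambda>j. X j \<le> \<epsilon> + \<theta> * (\<Sum>i\<in>{j - r..j + r}. X i)) sequentially"
    and "0 \<le> \<epsilon>" "0 < \<delta>"
  shows "eventually (\<lambda>j. X j \<le> 2 * \<epsilon> + \<delta>) sequentially"
proof -
  obtain J where J: "\<And>j. J \<le> j \<Longrightarrow> X j \<le> \<epsilon> + \<theta> * (\<Sum>i\<in>{j - r..j + r}. X i)"
    using dom by (auto simp: eventually_sequentially)
  have halving: "X j \<le> 2 * \<epsilon> + B / 2 ^ t" if "J + t * r \<le> j" for t j
    using that
  proof (induction t arbitrary: j)
    case 0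
    show ?case using bound(1)[of j] \<open>0 \<le> \<epsilon>\<close> by simp
  next
    case (Suc t)
    let ?M = "2 * \<epsilon> + B / 2 ^ t"
    have "(\<Sum>i\<in>{j - r..j + r}. X i) \<le> (2 * real r + 1) * ?M"
      using Suc bound \<open>0 \<le> \<epsilon>\<close> by (intro sum_window_le) auto
    then have "\<theta> * (\<Sum>i\<in>{j - r..j + r}. X i) \<le> \<theta> * ((2 * real r + 1) * ?M)"
      using theta(1) by (rule mult_left_mono)
    moreover have "X j \<le> \<epsilon> + \<theta> * (\<Sum>i\<in>{j - r..j + r}. X i)"
      using J[of j] Suc.prems by simp
    ultimately have "X j \<le> \<epsilon> + \<theta> * (2 * real r + 1) * ?M"
      by (simp only: mult.assoc)
    also have "\<theta> * (2 * real r + 1) * ?M \<le> ?M / 2"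
      using theta bound \<open>0 \<le> \<epsilon>\<close> by (intro order_trans[OF mult_right_mono[OF theta(2)]]) auto
    finally show ?case by (simp add: field_simps)
  qed
  obtain t where "B / 2 ^ t < \<delta>"
    using order_tendstoD(2)[OF LIMSEQ_divide_realpow_zero[of 2 B] \<open>0 < \<delta>\<close>]
    by (auto simp: eventually_sequentially)
  then have "X j \<le> 2 * \<epsilon> + \<delta>" if "J + t * r \<le> j" for j
    using halving[OF that] by linarith
  then show ?thesis by (auto simp: eventually_sequentially)
qed

lemma window_domination_tendsto_zero:
  fixes X :: "nat \<Rightarrow> real"
  assumes nonneg: "\<And>j. 0 \<le> X j" and growth: "\<And>j. X j \<le> c * 2 ^ j"
    and dom: "\<And>\<theta> \<epsilon>. 0 < \<theta> \<Longrightarrow> 0 < \<epsilon> \<Longrightarrow>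
      eventually (\<lambda>j. X j \<le> \<epsilon> + \<theta> * (\<Sum>i\<in>{j - r..j + r}. X i)) sequentially"
  shows "X \<longlonglongrightarrow> 0"
proof -
  have "0 \<le> c" using nonneg[of 0] growth[of 0] by simp
  define \<theta> where "\<theta> = 1 / ((2 * real r + 1) * 2 ^ Suc r)"
  have \<theta>: "0 < \<theta>" "\<theta> * (2 * real r + 1) * 2 ^ Suc r \<le> 1"
    unfolding \<theta>_def by (auto simp: add_pos_nonneg)
  obtain B where B: "\<forall>j. X j \<le> B"
    using bounded_of_window_domination[OF growth \<open>0 \<le> c\<close> less_imp_le[OF \<theta>(1)] \<theta>(2) dom[OF \<theta>(1) zero_less_one]] ..
  have "0 \<le> B" using nonneg[of 0] spec[OF B, of 0] by simp
  define \<theta>' where "\<theta>' = 1 / (2 * (2 * real r + 1))"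
  have \<theta>': "0 < \<theta>'" "\<theta>' * (2 * real r + 1) \<le> 1 / 2"
    unfolding \<theta>'_def by (auto simp: add_pos_nonneg)
  show ?thesis
  proof (rule order_tendstoI)
    fix e :: real assume "0 < e"
    have "eventually (\<lambda>j. X j \<le> 2 * (e / 4) + e / 4) sequentially"
      using \<open>0 < e\<close> \<theta>' B \<open>0 \<le> B\<close> dom[OF \<theta>'(1), of "e / 4"]
      by (intro eventually_le_of_window_domination[where \<theta> = \<theta>']) auto
    then show "eventually (\<lambda>j. X j < e) sequentially"
      by eventually_elim (use \<open>0 < e\<close> in simp)
  next
    fix e :: real assume "e < 0"
    then show "eventually (\<lambda>j. e < X j) sequentially"
      by (intro always_eventually allI less_le_trans[OF _ nonneg])
  qed
qed

lemma window_sum_tendsto_zero: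
  fixes X :: "nat \<Rightarrow> real"
  assumes "X \<longlonglongrightarrow> 0"
  shows "(\<lambda>j. \<Sum>i\<in>{j - r..j + r}. X i) \<longlonglongrightarrow> 0"
proof -
  have "(\<lambda>j. \<Sum>d\<in>{0..2 * r}. X (d + (j - r))) \<longlonglongrightarrow> 0"
  proof (rule tendsto_null_sum)
    fix d
    have "filterlim (\<lambda>j. d + (j - r)) sequentially sequentially"
      by (rule filterlim_at_top_mono[OF filterlim_minus_const_nat_at_top[of r]]) simp
    then show "(\<lambda>j. X (d + (j - r))) \<longlonglongrightarrow> 0"
      by (rule filterlim_compose[OF assms])
  qed
  moreover have "eventually (\<lambda>j. (\<Sum>d\<in>{0..2 * r}. X (d + (j - r))) = (\<Sum>i\<in>{j - r..j + r}. X i)) sequentially"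
    using eventually_ge_at_top[of r]
  proof eventually_elim
    case (elim j)
    then show ?case
      using sum.shift_bounds_cl_nat_ivl[of X 0 "j - r" "2 * r"] by (simp add: add.commute)
  qed
  ultimately show ?thesis by (rule Lim_transform_eventually)
qed

definition dyadic_mass :: "(nat \<Rightarrow> real) \<Rightarrow> nat \<Rightarrow> real" where
  "dyadic_mass a j = (\<Sum>k\<in>{2 ^ j..<2 ^ Suc j}. \<bar>a k\<bar>)"

definition dyadic_variation :: "(nat \<Rightarrow> real) \<Rightarrow> nat \<Rightarrow> real" where
  "dyadic_variation a j = (\<Sum>k\<in>{2 ^ j..<2 ^ Suc j}. \<bar>a k - a (Suc k)\<bar>)"

definition GM_inequality :: "real \<Rightarrow> real \<Rightarrow> (nat \<Rightarrow> real) \<Rightarrow> bool" where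
  "GM_inequality C L a \<longleftrightarrow> (\<forall>n\<ge>1. (\<Sum>k = n..2 * n. \<bar>a k - a (Suc k)\<bar>)
       \<le> C * (\<Sum>k\<in>{k. real n / L \<le> real k \<and> real k \<le> L * real n}. \<bar>a k\<bar> / real k))"

lemma GMS_realE:
  assumes "GMS (\<lambda>n. complex_of_real (a n))"
  obtains C L where "1 < C" "1 < L" "GM_inequality C L a"
proof -
  have norm_diff: "norm (complex_of_real x - complex_of_real y) = \<bar>x - y\<bar>" for x y
    by (simp flip: of_real_diff)
  from assms obtain C L where "1 < C" "1 < L" and GM: "\<forall>n::nat. n \<ge> 1 \<longrightarrow>
      (\<Sum>k = n..2 * n. norm (complex_of_real (a k) - complex_of_real (a (k + 1))))
        \<le> C * (\<Sum>k\<in>{k. real n / L \<le> real k \<and> real k \<le> L * real n}.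
                 norm (complex_of_real (a k)) / real k)"
    unfolding GMS_def by (elim conjE exE)
  then have "GM_inequality C L a"
    by (simp add: GM_inequality_def norm_diff)
  with \<open>1 < C\<close> \<open>1 < L\<close> show thesis by (rule that)
qed

lemma GM_window_subset_dyadic:
  assumes "0 < L" "L \<le> 2 ^ r" "r \<le> j"
  shows "{k. real (2 ^ j) / L \<le> real k \<and> real k \<le> L * real (2 ^ j)} \<subseteq> {2 ^ (j - r)..<2 ^ Suc (j + r)}"
proof
  fix k assume k: "k \<in> {k. real (2 ^ j) / L \<le> real k \<and> real k \<le> L * real (2 ^ j)}"
  have "real (2 ^ (j - r)) = (2::real) ^ (j - r)" by simp
  also have "\<dots> = 2 ^ j / 2 ^ r"
    using \<open>r \<le> j\<close> by (simp add: power_diff)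
  also have "\<dots> \<le> 2 ^ j / L"
    using assms by (intro divide_left_mono) auto
  also have "\<dots> \<le> real k" using k by simp
  finally have "2 ^ (j - r) \<le> k" by linarith
  have "real k \<le> L * 2 ^ j" using k by simp
  also have "\<dots> \<le> 2 ^ r * 2 ^ j" using assms by (intro mult_right_mono) auto
  also have "\<dots> < 2 ^ Suc (j + r)" by (simp add: power_add)
  also have "\<dots> = real (2 ^ Suc (j + r))" by simp
  finally have "k < 2 ^ Suc (j + r)" by (simp only: of_nat_less_iff)
  with \<open>2 ^ (j - r) \<le> k\<close> show "k \<in> {2 ^ (j - r)..<2 ^ Suc (j + r)}" by simp
qed

lemma dyadic_variation_le_window_mass:
  assumes GM: "GM_inequality C L a"
    and "0 \<le> C" "0 < L" "L \<le> 2 ^ r" "r \<le> j"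
  shows "dyadic_variation a j \<le> C * L / 2 ^ j * (\<Sum>i\<in>{j - r..j + r}. dyadic_mass a i)"
proof -
  let ?W = "{k. real (2 ^ j :: nat) / L \<le> real k \<and> real k \<le> L * real (2 ^ j :: nat)}"
  have W: "?W \<subseteq> {2 ^ (j - r)..<2 ^ Suc (j + r)}"
    using assms(3-5) by (rule GM_window_subset_dyadic)
  have "dyadic_variation a j \<le> (\<Sum>k = 2 ^ j..2 * 2 ^ j. \<bar>a k - a (Suc k)\<bar>)"
    unfolding dyadic_variation_def by (rule sum_mono2) auto
  also have "\<dots> \<le> C * (\<Sum>k\<in>?W. \<bar>a k\<bar> / real k)"
    using GM[unfolded GM_inequality_def, rule_format, of "2 ^ j"] by simp
  also have "\<dots> \<le> C * (\<Sum>k\<in>?W. \<bar>a k\<bar> * (L / 2 ^ j))"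
  proof (intro mult_left_mono sum_mono \<open>0 \<le> C\<close>)
    fix k assume "k \<in> ?W"
    then have k: "2 ^ j \<le> L * real k"
      using \<open>0 < L\<close> by (simp add: pos_divide_le_eq mult.commute)
    have "(0::real) < 2 ^ j" by simp
    with k have "0 < L * real k" by linarith
    then have "0 < real k"
      using \<open>0 < L\<close> by (simp add: zero_less_mult_iff)
    with k have "1 / real k \<le> L / 2 ^ j"
      by (simp add: divide_simps mult.commute)
    then show "\<bar>a k\<bar> / real k \<le> \<bar>a k\<bar> * (L / 2 ^ j)"
      using mult_left_mono[of _ _ "\<bar>a k\<bar>"] by fastforce
  qed
  also have "\<dots> \<le> C * (\<Sum>k\<in>{2 ^ (j - r)..<2 ^ Suc (j + r)}. \<bar>a k\<bar> * (L / 2 ^ j))"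
    using W \<open>0 \<le> C\<close> \<open>0 < L\<close> by (intro mult_left_mono sum_mono2) auto
  also have "\<dots> = C * ((\<Sum>k\<in>{2 ^ (j - r)..<2 ^ Suc (j + r)}. \<bar>a k\<bar>) * (L / 2 ^ j))"
    by (simp only: sum_distrib_right)
  also have "(\<Sum>k\<in>{2 ^ (j - r)..<2 ^ Suc (j + r)}. \<bar>a k\<bar>) = (\<Sum>i\<in>{j - r..j + r}. dyadic_mass a i)"
    unfolding dyadic_mass_def atLeastLessThanSuc_atLeastAtMost[symmetric] by (rule sum_dyadic_blocks) simp
  finally show ?thesis by (simp add: field_simps)
qed

lemma eventually_dyadic_mass_le_variation:
  assumes "summable a" "0 < \<epsilon>"
  shows "eventually (\<lambda>j. dyadic_mass a j \<le> \<epsilon> + 2 ^ (j - s) * dyadic_variation a j) sequentially"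
proof -
  define N :: nat where "N = 2 ^ s"
  have "0 < \<epsilon> / N" using \<open>0 < \<epsilon>\<close> by (simp add: N_def)
  then obtain P where P: "\<And>m n. P \<le> m \<Longrightarrow> \<bar>\<Sum>k = m..n. a k\<bar> < \<epsilon> / N"
    using summable_partial_sum_bound[OF \<open>summable a\<close>] by (metis real_norm_def)
  have bound: "dyadic_mass a j \<le> \<epsilon> + 2 ^ (j - s) * dyadic_variation a j" if "s \<le> j" "P \<le> j" for j
  proof -
    define h :: nat where "h = 2 ^ (j - s)"
    have "0 < h" by (simp add: h_def)
    have "(2::nat) ^ j = N * h" using \<open>s \<le> j\<close> by (simp add: N_def h_def flip: power_add)
    then have block: "{(2::nat) ^ j..<2 ^ Suc j} = {2 ^ j..<2 ^ j + N * h}" by (simp add: mult_2)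
    have "P \<le> 2 ^ j" using \<open>P \<le> j\<close> less_exp[of j] by linarith
    have piece: "(\<Sum>k\<in>{p..<p + h}. \<bar>a k\<bar>) \<le> \<epsilon> / N + h * (\<Sum>k\<in>{p..<p + h}. \<bar>a k - a (Suc k)\<bar>)"
      if "2 ^ j \<le> p" for p
    proof -
      have "{p..<p + h} = {p..p + h - 1}" using \<open>0 < h\<close> by auto
      then have "\<bar>\<Sum>k\<in>{p..<p + h}. a k\<bar> < \<epsilon> / N"
        using P[of p] \<open>P \<le> 2 ^ j\<close> that by simp
      then show ?thesis
        using sum_norm_le_norm_sum_plus_variation[of a p "p + h"] by simp
    qed
    have "dyadic_mass a j \<le> (\<Sum>t<N. \<epsilon> / N + h * (\<Sum>k\<in>{2 ^ j + t * h..<2 ^ j + t * h + h}. \<bar>a k - a (Suc k)\<bar>))"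
      unfolding dyadic_mass_def block sum_equal_blocks by (intro sum_mono piece) simp
    also have "\<dots> = \<epsilon> + h * dyadic_variation a j"
      unfolding dyadic_variation_def block sum_equal_blocks
      by (simp add: sum.distrib sum_distrib_left N_def)
    finally show ?thesis by (simp add: h_def)
  qed
  show ?thesis
    using eventually_ge_at_top[of s] eventually_ge_at_top[of P] by eventually_elim (rule bound)
qed

lemma dyadic_mass_window_domination:
  assumes "summable a"
    and variation: "\<And>j. r \<le> j \<Longrightarrow> dyadic_variation a j \<le> K / 2 ^ j * (\<Sum>i\<in>{j - r..j + r}. dyadic_mass a i)"
    and "0 < \<theta>" "0 < \<epsilon>"
  shows "eventually (\<lambda>j. dyadic_mass a j \<le> \<epsilon> + \<theta> * (\<Sum>i\<in>{j - r..j + r}. dyadic_mass a i)) sequentially"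
proof -
  obtain s where "K / \<theta> < 2 ^ s" using real_arch_pow[of 2 "K / \<theta>"] by auto
  then have "K / 2 ^ s \<le> \<theta>" using \<open>0 < \<theta>\<close> by (simp add: field_simps)
  have bound: "dyadic_mass a j \<le> \<epsilon> + \<theta> * (\<Sum>i\<in>{j - r..j + r}. dyadic_mass a i)"
    if "dyadic_mass a j \<le> \<epsilon> + 2 ^ (j - s) * dyadic_variation a j" "r \<le> j" "s \<le> j" for j
  proof -
    have "0 \<le> (\<Sum>i\<in>{j - r..j + r}. dyadic_mass a i)"
      by (auto simp: dyadic_mass_def intro!: sum_nonneg)
    have "2 ^ (j - s) * dyadic_variation a j \<le> 2 ^ (j - s) * (K / 2 ^ j * (\<Sum>i\<in>{j - r..j + r}. dyadic_mass a i))"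
      using variation[OF \<open>r \<le> j\<close>] by (intro mult_left_mono) auto
    also have "\<dots> = K / 2 ^ s * (\<Sum>i\<in>{j - r..j + r}. dyadic_mass a i)"
      using \<open>s \<le> j\<close> by (simp add: power_diff)
    also have "\<dots> \<le> \<theta> * (\<Sum>i\<in>{j - r..j + r}. dyadic_mass a i)"
      using \<open>K / 2 ^ s \<le> \<theta>\<close> \<open>0 \<le> (\<Sum>i\<in>{j - r..j + r}. dyadic_mass a i)\<close> by (rule mult_right_mono)
    finally show ?thesis using that(1) by linarith
  qed
  show ?thesis
    using eventually_dyadic_mass_le_variation[OF assms(1,4), of s]
      eventually_ge_at_top[of r] eventually_ge_at_top[of s]
    by eventually_elim (rule bound)
qed

lemma abs_real_mult_le_dyadic:
  assumes "0 < n"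
  shows "\<bar>real n * a n\<bar> \<le> 2 * (dyadic_mass a (floor_log n) + 2 ^ floor_log n * dyadic_variation a (floor_log n))"
proof -
  let ?j = "floor_log n"
  let ?B = "{2 ^ ?j..<2 ^ Suc ?j :: nat}"
  have n: "n \<in> {2 ^ ?j..<2 ^ Suc ?j}"
    using floor_log_exp2_le[OF assms] floor_log_exp2_gt[of n] by simp
  have "\<bar>a n\<bar> \<le> \<bar>a k\<bar> + dyadic_variation a ?j" if "k \<in> ?B" for k
    using norm_diff_le_sum_norm_diff[of n "2 ^ ?j" "2 ^ Suc ?j" k a] n that
    unfolding dyadic_variation_def by auto
  then have "(\<Sum>k\<in>?B. \<bar>a n\<bar>) \<le> (\<Sum>k\<in>?B. \<bar>a k\<bar> + dyadic_variation a ?j)"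
    by (rule sum_mono)
  then have block_bound: "2 ^ ?j * \<bar>a n\<bar> \<le> dyadic_mass a ?j + 2 ^ ?j * dyadic_variation a ?j"
    by (simp add: dyadic_mass_def sum.distrib)
  have "real n \<le> 2 * 2 ^ ?j"
    using floor_log_exp2_gt[of n] by (metis of_nat_le_iff of_nat_mult of_nat_numeral of_nat_power less_imp_le)
  then have "\<bar>real n * a n\<bar> \<le> 2 * 2 ^ ?j * \<bar>a n\<bar>"
    by (simp add: abs_mult mult_right_mono)
  also have "\<dots> \<le> 2 * (dyadic_mass a ?j + 2 ^ ?j * dyadic_variation a ?j)"
    using block_bound by simp
  finally show ?thesis .
qed

lemma filterlim_floor_log_sequentially: "filterlim floor_log sequentially sequentially"
  unfolding filterlim_at_top
proof
  fix m
  show "eventually (\<lambda>n. m \<le> floor_log n) sequentially"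
    using eventually_ge_at_top[of "2 ^ m"]
    by eventually_elim (metis floor_log_le_iff floor_log_power)
qed

lemma scaled_tendsto_zero_of_dyadic_mass:
  fixes a :: "nat \<Rightarrow> real"
  assumes mass: "dyadic_mass a \<longlonglongrightarrow> 0"
    and variation: "\<And>j. r \<le> j \<Longrightarrow> dyadic_variation a j \<le> K / 2 ^ j * (\<Sum>i\<in>{j - r..j + r}. dyadic_mass a i)"
  shows "(\<lambda>n. real n * a n) \<longlonglongrightarrow> 0"
proof (rule Lim_null_comparison)
  let ?W = "\<lambda>j. \<Sum>i\<in>{j - r..j + r}. dyadic_mass a i"
  have "(\<lambda>j. 2 * (dyadic_mass a j + K * ?W j)) \<longlonglongrightarrow> 0"
    using mass by (auto intro!: tendsto_eq_intros window_sum_tendsto_zero)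
  then show "(\<lambda>n. 2 * (dyadic_mass a (floor_log n) + K * ?W (floor_log n))) \<longlonglongrightarrow> 0"
    by (rule filterlim_compose[OF _ filterlim_floor_log_sequentially])
  show "eventually (\<lambda>n. norm (real n * a n) \<le> 2 * (dyadic_mass a (floor_log n) + K * ?W (floor_log n))) sequentially"
    using eventually_ge_at_top[of "2 ^ r"]
  proof eventually_elim
    case (elim n)
    then have "r \<le> floor_log n" by (metis floor_log_le_iff floor_log_power)
    then have "2 ^ floor_log n * dyadic_variation a (floor_log n) \<le> K * ?W (floor_log n)"
      using mult_left_mono[OF variation, of "floor_log n" "2 ^ floor_log n"] by simp
    moreover have "0 < n" using elim less_le_trans[of 0 "2 ^ r" n] by simp
    ultimately show ?case using abs_real_mult_le_dyadic[of n a] by simp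
  qed
qed

theorem mainTheorem6:
  fixes a :: "nat \<Rightarrow> real"
  assumes "GMS (\<lambda>n. complex_of_real (a n))"
    and "summable a"
  shows "(\<lambda>n. real n * a n) \<longlonglongrightarrow> 0"
proof -
  obtain C L where "1 < C" "1 < L" and GM: "GM_inequality C L a"
    using GMS_realE[OF assms(1)] by blast
  obtain r where "L \<le> 2 ^ r" using real_arch_pow[of 2 L] by (auto intro: less_imp_le)
  have variation: "dyadic_variation a j \<le> C * L / 2 ^ j * (\<Sum>i\<in>{j - r..j + r}. dyadic_mass a i)"
    if "r \<le> j" for j
    using dyadic_variation_le_window_mass[OF GM] \<open>1 < C\<close> \<open>1 < L\<close> \<open>L \<le> 2 ^ r\<close> that by simp
  obtain c where "\<And>k. \<bar>a k\<bar> \<le> c"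
    using summable_LIMSEQ_zero[OF assms(2)] by (metis convergent_imp_Bseq convergentI BseqE real_norm_def)
  then have growth: "dyadic_mass a j \<le> c * 2 ^ j" for j
    using sum_bounded_above[of "{2 ^ j..<2 ^ Suc j}" "\<lambda>k. \<bar>a k\<bar>" c] by (simp add: dyadic_mass_def mult.commute)
  have "dyadic_mass a \<longlonglongrightarrow> 0"
    using dyadic_mass_window_domination[OF assms(2) variation]
    by (intro window_domination_tendsto_zero[OF _ growth]) (auto simp: dyadic_mass_def)
  then show ?thesis
    using variation by (rule scaled_tendsto_zero_of_dyadic_mass)
qed

end
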